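(* Let $S$ be a formula. The condition $\langle J+ss\rangle\subset D\,\mathbb{C}[D]\otimes S$ is equivalent to the conjunction of: (a) $\langle\mathrm{Jacobi}\rangle\subset D\,\mathbb{C}[D]\otimes S$, and (b) $u_nv+\varepsilon_{u,v}(-1)^nv_nu\in D\,\mathbb{C}[D]\otimes S$ for all homogeneous $u,v\in S$ and $n\ge0$. If these conditions hold, then $S$ is $(J+ss)$-injective.
   Context: All spaces over $\mathbb{C}$; $\mathbb{N}=\{0,1,2,\dots\}$; $\varepsilon_{u,v}=(-1)^{|u||v|}$. A formula is a $\mathbb{Z}_2$-graded space $S$ with parity-preserving linear maps $F_n:S\otimes S\to\mathbb{C}[D]\otimes S$ ($n\in\mathbb{N}$; $\mathbb{C}[D]$ even) with $F_n(u,v)=0$ for $n$ large; write $u_nv=F_n(u,v)$, identify $S=1\otimes S$, $D(D^k\otimes u)=D^{k+1}\otimes u$. The products extend uniquely to bilinear products $A_nB$ ($n\in\mathbb{N}$) on $\mathbb{C}[D]\otimes S$ with $(DA)_nB=-nA_{n-1}B$ and $D(A_nB)=(DA)_nB+A_n(DB)$; explicitly $\sum_{n\ge0}(P(D)u)_n(Q(D)v)z^{-n-1}=P(\frac{d}{dz})Q(D-\frac{d}{dz})\sum_{n\ge0}(u_nv)z^{-n-1}$. A two-sided ideal of $\mathbb{C}[D]\otimes S$ is a subspace $I$ with $A_nI\subset I$ and $I_nA\subset I$ for all $A$ and $n\ge0$. $\langle\mathrm{Jacobi}\rangle$ is the two-sided ideal generated by all $u_m(v_nw)-\varepsilon_{u,v}v_n(u_mw)-\sum_{i\ge0}\binom{m}{i}(u_iv)_{n+m-i}w$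 ($u,v,w\in\mathbb{C}[D]\otimes S$ homogeneous, $m,n\in\mathbb{N}$). $\langle J+ss\rangle$ is the two-sided ideal generated by these elements together with all $v_nw+\varepsilon_{v,w}\sum_{k\ge0}(-1)^{n+k}\frac{D^k}{k!}w_{n+k}v$ ($v,w$ homogeneous, $n\in\mathbb{N}$). $S$ is $(J+ss)$-injective if $S\cap\langle J+ss\rangle=0$, i.e. the composite $S\hookrightarrow\mathbb{C}[D]\otimes S\to(\mathbb{C}[D]\otimes S)/\langle J+ss\rangle$ is injective. *)

theory Defs
  imports Complex_Main "HOL-Library.Groups_Big_Fun" "HOL-Library.Function_Algebras"
begin

(* S is modelled as a complex vector space on a type 'a (scalar multiplication sc),
   Z2-graded by subspaces S0 (even) and S1 (odd).
   C[D] (x) S is modelled as finitely supported sequences A :: nat => 'a,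
   A k being the coefficient of D^k. *)

definition CDS :: "(nat \<Rightarrow> 'a::ab_group_add) set" where
  "CDS = {A. finite {k. A k \<noteq> 0}}"

definition scD :: "(complex \<Rightarrow> 'a \<Rightarrow> 'a) \<Rightarrow> complex \<Rightarrow> (nat \<Rightarrow> 'a) \<Rightarrow> (nat \<Rightarrow> 'a)" where
  "scD sc c A = (\<lambda>k. sc c (A k))"

definition Dpow :: "nat \<Rightarrow> (nat \<Rightarrow> 'a::ab_group_add) \<Rightarrow> (nat \<Rightarrow> 'a)" where
  "Dpow j A = (\<lambda>k. if j \<le> k then A (k - j) else 0)"

definition emb :: "'a::ab_group_add \<Rightarrow> (nat \<Rightarrow> 'a)" where
  "emb u = (\<lambda>k. if k = 0 then u else 0)"

definition is_formula ::
  "(complex \<Rightarrow> 'a::ab_group_add \<Rightarrow> 'a) \<Rightarrow> 'a set \<Rightarrow> 'a set \<Rightarrow> (nat \<Rightarrow> 'a \<Rightarrow> 'a \<Rightarrow> (nat \<Rightarrow> 'a)) \<Rightarrow> bool" where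
  "is_formula sc S0 S1 F \<longleftrightarrow>
     vector_space sc \<and> module.subspace sc S0 \<and> module.subspace sc S1 \<and>
     S0 \<inter> S1 = {0} \<and> (\<forall>x. \<exists>a\<in>S0. \<exists>b\<in>S1. x = a + b) \<and>
     (\<forall>n u u' v. F n (u + u') v = F n u v + F n u' v) \<and>
     (\<forall>n u v v'. F n u (v + v') = F n u v + F n u v') \<and>
     (\<forall>n c u v. F n (sc c u) v = scD sc c (F n u v)) \<and>
     (\<forall>n c u v. F n u (sc c v) = scD sc c (F n u v)) \<and>
     (\<forall>n u v. F n u v \<in> CDS) \<and>
     (\<forall>n u v. (u \<in> S0 \<and> v \<in> S0 \<longrightarrow> (\<forall>k. F n u v k \<in> S0)) \<and>
              (u \<in> S0 \<and> v \<in> S1 \<longrightarrow> (\<forall>k. F n u v k \<in> S1)) \<and>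
              (u \<in> S1 \<and> v \<in> S0 \<longrightarrow> (\<forall>k. F n u v k \<in> S1)) \<and>
              (u \<in> S1 \<and> v \<in> S1 \<longrightarrow> (\<forall>k. F n u v k \<in> S0))) \<and>
     (\<forall>u v. \<exists>N. \<forall>n\<ge>N. F n u v = 0)"

text \<open>(D^a u)_n (D^b v) for u, v in S, computed from
  sum_n (P(D)u)_n(Q(D)v) z^(-n-1) = P(d/dz) Q(D - d/dz) sum_n (u_n v) z^(-n-1):
  (D^a u)_n (D^b v) = sum_j (-1)^a a! C(n,a) C(b,j) j! C(n-a,j) D^(b-j) (u_(n-a-j) v).\<close>
definition prodS ::
  "(complex \<Rightarrow> 'a::ab_group_add \<Rightarrow> 'a) \<Rightarrow> (nat \<Rightarrow> 'a \<Rightarrow> 'a \<Rightarrow> (nat \<Rightarrow> 'a)) \<Rightarrow>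
   nat \<Rightarrow> nat \<Rightarrow> 'a \<Rightarrow> nat \<Rightarrow> 'a \<Rightarrow> (nat \<Rightarrow> 'a)" where
  "prodS sc F n a u b v =
     (\<Sum>j\<le>b. scD sc (of_int ((-1) ^ a * int (fact a * (n choose a) * (b choose j) * fact j * ((n - a) choose j))))
                 (Dpow (b - j) (F (n - a - j) u v)))"

definition prodD ::
  "(complex \<Rightarrow> 'a::ab_group_add \<Rightarrow> 'a) \<Rightarrow> (nat \<Rightarrow> 'a \<Rightarrow> 'a \<Rightarrow> (nat \<Rightarrow> 'a)) \<Rightarrow>
   nat \<Rightarrow> (nat \<Rightarrow> 'a) \<Rightarrow> (nat \<Rightarrow> 'a) \<Rightarrow> (nat \<Rightarrow> 'a)" where
  "prodD sc F n A B = (\<Sum>a\<in>{a. A a \<noteq> 0}. \<Sum>b\<in>{b. B b \<noteq> 0}. prodS sc F n a (A a) b (B b))"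

definition homD :: "'a set \<Rightarrow> 'a set \<Rightarrow> (nat \<Rightarrow> 'a::ab_group_add) \<Rightarrow> bool" where
  "homD S0 S1 A \<longleftrightarrow> A \<in> CDS \<and> ((\<forall>k. A k \<in> S0) \<or> (\<forall>k. A k \<in> S1))"

text \<open>parity sign eps_{A,B} = (-1)^(|A||B|) (for A = 0 or B = 0 its value is irrelevant)\<close>
definition epsD :: "'a set \<Rightarrow> (nat \<Rightarrow> 'a) \<Rightarrow> (nat \<Rightarrow> 'a) \<Rightarrow> complex" where
  "epsD S1 A B = (if (\<forall>k. A k \<in> S1) \<and> (\<forall>k. B k \<in> S1) then -1 else 1)"

definition jacobi_elt where
  "jacobi_elt sc S1 F m n u v w =
     prodD sc F m u (prodD sc F n v w)
     - scD sc (epsD S1 u v) (prodD sc F n v (prodD sc F m u w))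
     - (\<Sum>i\<le>m. scD sc (of_nat (m choose i)) (prodD sc F (n + m - i) (prodD sc F i u v) w))"

definition skew_elt where
  "skew_elt sc S1 F n v w =
     prodD sc F n v w
     + scD sc (epsD S1 v w)
         (\<Sum>k. scD sc ((-1) ^ (n + k) / of_nat (fact k)) (Dpow k (prodD sc F (n + k) w v)))"

definition is_ideal where
  "is_ideal sc F I \<longleftrightarrow> I \<subseteq> CDS \<and> 0 \<in> I \<and>
     (\<forall>X\<in>I. \<forall>Y\<in>I. X + Y \<in> I) \<and> (\<forall>c. \<forall>X\<in>I. scD sc c X \<in> I) \<and>
     (\<forall>A\<in>CDS. \<forall>X\<in>I. \<forall>n. prodD sc F n A X \<in> I \<and> prodD sc F n X A \<in> I)"

definition gen_ideal where
  "gen_ideal sc F G = \<Inter>{I. is_ideal sc F I \<and> G \<subseteq> I}"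

definition jacobi_gens where
  "jacobi_gens sc S0 S1 F =
     {jacobi_elt sc S1 F m n u v w | m n u v w. homD S0 S1 u \<and> homD S0 S1 v \<and> homD S0 S1 w}"

definition skew_gens where
  "skew_gens sc S0 S1 F = {skew_elt sc S1 F n v w | n v w. homD S0 S1 v \<and> homD S0 S1 w}"

definition DCDS :: "(nat \<Rightarrow> 'a::ab_group_add) set" where
  "DCDS = {A \<in> CDS. A 0 = 0}"

end

theory Submission
  imports Defs
begin

(*
  Write ss(n, X, Y) = X_n Y + eps(X,Y) sum_k (-1)^(n+k) D^k/k! (Y_(n+k) X) for the skew-symmetry
  elements.  For homogeneous X, Y, Z the product ss(n, X, Y)_m Z is a combination of Jacobi
  relations: by induction on n, starting from the Jacobi identities for (X, Y) and for (Y, X).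
  The Jacobi ideal is stable under D, since D is a derivation of all products and maps Jacobi
  relations to sums of Jacobi relations; so Z_m ss(n, X, Y) = ss(m, Z, ss(n, X, Y)) modulo the Jacobi
  ideal.  Hence <J+ss> is the Jacobi ideal plus the linear span of the skew-symmetry elements.
  The coefficient of D^0 in ss(n, X, Y) is a combination of the constant terms of
  u_p v + eps(u,v) (-1)^p v_p u for components u, v of X, Y, which gives the equivalence; and u in S
  is its own constant term, which gives injectivity.
*)

lemma sum_fun_apply: "sum f A x = (\<Sum>i\<in>A. f i x)"
  by (induction A rule: infinite_finite_induct) auto

lemma CDS_iff_eventually_zero: "A \<in> CDS \<longleftrightarrow> (\<forall>\<^sub>F k in sequentially. A k = 0)"
  by (simp add: CDS_def eventually_cofinite cofinite_eq_sequentially[symmetric])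

lemma CDS_zero [simp]: "0 \<in> CDS"
  by (simp add: CDS_def)

lemma CDS_add [simp]: "A \<in> CDS \<Longrightarrow> B \<in> CDS \<Longrightarrow> A + B \<in> CDS"
  unfolding CDS_iff_eventually_zero by (auto elim: eventually_elim2 simp: plus_fun_apply)

lemma CDS_uminus [simp]: "A \<in> CDS \<Longrightarrow> - A \<in> CDS"
  by (simp add: CDS_def)

lemma CDS_diff [simp]: "A \<in> CDS \<Longrightarrow> B \<in> CDS \<Longrightarrow> A - B \<in> CDS"
  using CDS_add[of A "- B"] by simp

lemma CDS_sum [simp]: "(\<And>i. i \<in> I \<Longrightarrow> f i \<in> CDS) \<Longrightarrow> sum f I \<in> CDS"
  by (induction I rule: infinite_finite_induct) auto

lemma CDS_Sum_any [simp]: "(\<And>i. f i \<in> CDS) \<Longrightarrow> Sum_any f \<in> CDS"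
  unfolding Sum_any.expand_set by simp

lemma CDS_Dpow [simp]:
  assumes "A \<in> CDS"
  shows "Dpow j A \<in> CDS"
proof -
  obtain N where "\<forall>k\<ge>N. A k = 0"
    using assms unfolding CDS_iff_eventually_zero eventually_sequentially by blast
  then have "\<forall>k\<ge>N + j. Dpow j A k = 0"
    by (auto simp: Dpow_def)
  then show ?thesis
    unfolding CDS_iff_eventually_zero eventually_sequentially by blast
qed

lemma CDS_emb [simp]: "emb u \<in> CDS"
  unfolding CDS_iff_eventually_zero eventually_sequentially emb_def by (rule exI[of _ 1]) auto

lemma CDS_common_bound:
  assumes "A \<in> CDS" "B \<in> CDS"
  obtains N where "\<forall>k\<ge>N. A k = 0" "\<forall>k\<ge>N. B k = 0"
proof -
  have "\<forall>\<^sub>F k in sequentially. A k = 0 \<and> B k = 0"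
    using assms unfolding CDS_iff_eventually_zero by (rule eventually_conj)
  then show ?thesis
    using that unfolding eventually_sequentially by blast
qed

lemma Dpow_0 [simp]: "Dpow 0 A = A"
  by (simp add: Dpow_def)

lemma Dpow_zero [simp]: "Dpow j 0 = 0"
  by (simp add: Dpow_def fun_eq_iff)

lemma Dpow_add: "Dpow j (A + B) = Dpow j A + Dpow j B"
  by (simp add: Dpow_def fun_eq_iff)

lemma Dpow_diff: "Dpow j (A - B) = Dpow j A - Dpow j B"
  by (simp add: Dpow_def fun_eq_iff)

lemma Dpow_sum: "Dpow j (sum f I) = (\<Sum>i\<in>I. Dpow j (f i))"
  using sum_comp_morphism[of "Dpow j" f I] by (simp add: Dpow_add comp_def)

lemma Dpow_Dpow: "Dpow i (Dpow j A) = Dpow (i + j) A"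
  by (auto simp: Dpow_def fun_eq_iff)

lemma Dpow_at_0: "Dpow j A 0 = (if j = 0 then A 0 else 0)"
  by (simp add: Dpow_def)

lemma sum_lessThan_Suc_Dpow1:
  "(\<And>a. g a 0 = 0) \<Longrightarrow> (\<Sum>a<Suc N. g a (Dpow 1 A a)) = (\<Sum>a<N. g (Suc a) (A a))"
  by (subst sum.lessThan_Suc_shift) (simp add: Dpow_def)

lemma (in module) binomial_sum_Suc:
  "(\<Sum>j\<le>Suc b. of_nat (Suc b choose j) *s g (Suc b - j) j) =
   (\<Sum>j\<le>b. of_nat (b choose j) *s g (Suc b - j) j) + (\<Sum>j\<le>b. of_nat (b choose j) *s g (b - j) (Suc j))"
proof -
  define t where "t j = of_nat (b choose j) *s g (Suc b - j) j" for j
  have "(\<Sum>j\<le>b. t j) = (\<Sum>j\<le>Suc b. t j)"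
    by (simp add: t_def binomial_eq_0)
  also have "\<dots> = t 0 + (\<Sum>j\<le>b. of_nat (b choose Suc j) *s g (b - j) (Suc j))"
    by (subst sum.atMost_Suc_shift) (simp add: t_def)
  finally have shifted: "(\<Sum>j\<le>b. of_nat (b choose Suc j) *s g (b - j) (Suc j)) = (\<Sum>j\<le>b. t j) - t 0"
    by (simp add: algebra_simps)
  have "(\<Sum>j\<le>Suc b. of_nat (Suc b choose j) *s g (Suc b - j) j) =
        t 0 + (\<Sum>j\<le>b. of_nat (Suc b choose Suc j) *s g (b - j) (Suc j))"
    by (subst sum.atMost_Suc_shift) (simp add: t_def)
  also have "\<dots> = t 0 + (\<Sum>j\<le>b. of_nat (b choose j) *s g (b - j) (Suc j))
                      + (\<Sum>j\<le>b. of_nat (b choose Suc j) *s g (b - j) (Suc j))"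
    by (simp add: scale_left_distrib sum.distrib algebra_simps)
  finally show ?thesis
    unfolding shifted t_def by (simp add: algebra_simps)
qed

definition falling_fact :: "nat \<Rightarrow> nat \<Rightarrow> nat" where
  "falling_fact m k = fact k * (m choose k)"

lemma falling_fact_Suc: "falling_fact m (Suc k) = falling_fact m k * (m - k)"
proof -
  have "Suc k * (m choose Suc k) = (m choose k) * (m - k)"
    by (metis binomial_absorb_comp binomial_absorption mult.commute)
  then have "fact k * (Suc k * (m choose Suc k)) = fact k * ((m choose k) * (m - k))"
    by simp
  then show ?thesis
    unfolding falling_fact_def by (simp add: algebra_simps)
qed

lemma falling_fact_Suc_left: "falling_fact m (Suc k) = m * falling_fact (m - 1) k"
proof -
  have "Suc k * (m choose Suc k) = m * ((m - 1) choose k)"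
    by (rule binomial_absorption)
  then have "fact k * (Suc k * (m choose Suc k)) = fact k * (m * ((m - 1) choose k))"
    by simp
  then show ?thesis
    unfolding falling_fact_def by (simp add: algebra_simps)
qed

lemma falling_fact_add:
  "fact a * (n choose a) * fact j * ((n - a) choose j) = falling_fact n (a + j)"
proof (cases "a + j \<le> n")
  case True
  have "(n choose (a + j)) * ((a + j) choose a) = (n choose a) * ((n - a) choose j)"
    using choose_mult[of a "a + j" n] True by simp
  moreover have "((a + j) choose a) * fact a * fact j = fact (a + j)"
    using binomial_fact_lemma[of a "a + j"] by (simp add: algebra_simps)
  ultimately show ?thesis
    unfolding falling_fact_def by (metis (no_types, lifting) mult.assoc mult.commute)
next
  case False
  then have "(n choose a) * ((n - a) choose j) = 0"
    by (cases "a \<le> n") auto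
  then show ?thesis
    using False by (simp add: falling_fact_def binomial_eq_0 mult.commute mult.left_commute)
qed

lemma skew_coeff_falling_fact:
  "((-1) ^ (n + k) / of_nat (fact k) * ((-1) ^ k * of_nat (falling_fact m k)) :: 'a::field_char_0)
     = (-1) ^ n * of_nat (m choose k)"
proof -
  have "((-1) ^ (n + k) * (-1) ^ k :: 'a) = (-1) ^ n"
    by (simp add: power_add mult.assoc power_mult_distrib[symmetric])
  then show ?thesis
    unfolding falling_fact_def by (simp add: field_simps)
qed

lemma minus_one_power_add_right: "(-1) ^ (p + a + b) * (-1) ^ b = ((-1) ^ a * (-1) ^ p :: 'a::comm_ring_1)"
proof -
  have "(-1) ^ (p + a + b) * (-1) ^ b = ((-1) ^ a * (-1) ^ p :: 'a) * ((-1) ^ b * (-1) ^ b)"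
    by (simp add: power_add mult_ac)
  also have "(-1) ^ b * (-1) ^ b = (1 :: 'a)"
    by (simp flip: power_add)
  finally show ?thesis
    by simp
qed

section \<open>The products on \<open>C[D] \<otimes> S\<close>\<close>

(* Elements of C[D] (x) S are treated as vectors; the pointwise simp rules for + and - on functions
   would make the simplifier eta-expand them. *)
declare plus_fun_apply [simp del] minus_apply [simp del] uminus_apply [simp del]

locale formula =
  fixes sc :: "complex \<Rightarrow> 'a::ab_group_add \<Rightarrow> 'a"
    and S0 S1 :: "'a set"
    and F :: "nat \<Rightarrow> 'a \<Rightarrow> 'a \<Rightarrow> (nat \<Rightarrow> 'a)"
  assumes formula: "is_formula sc S0 S1 F"
begin

sublocale S: vector_space sc
  using formula by (simp add: is_formula_def)

sublocale CD: module "scD sc"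
  by unfold_locales (simp_all add: scD_def fun_eq_iff plus_fun_apply S.scale_right_distrib S.scale_left_distrib)

lemma scD_apply: "scD sc c A k = sc c (A k)"
  by (simp add: scD_def)

lemma Dpow_scD: "Dpow j (scD sc c A) = scD sc c (Dpow j A)"
  by (simp add: Dpow_def scD_def fun_eq_iff)

lemma CDS_scD [simp]: "A \<in> CDS \<Longrightarrow> scD sc c A \<in> CDS"
  unfolding CDS_iff_eventually_zero by (auto simp: scD_apply elim: eventually_mono)

lemma subspace_CDS: "CD.subspace CDS"
  by (simp add: CD.subspace_def)

lemma F_add_left: "F n (u + u') v = F n u v + F n u' v"
  and F_add_right: "F n u (v + v') = F n u v + F n u v'"
  and F_scale_left: "F n (sc c u) v = scD sc c (F n u v)"
  and F_scale_right: "F n u (sc c v) = scD sc c (F n u v)"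
  and F_CDS [simp]: "F n u v \<in> CDS"
  and F_eventually_zero: "\<exists>N. \<forall>n\<ge>N. F n u v = 0"
  using formula by (simp_all add: is_formula_def)

lemma F_zero_left [simp]: "F n 0 v = 0"
  using F_add_left[of n 0 0 v] by simp

lemma F_zero_right [simp]: "F n u 0 = 0"
  using F_add_right[of n u 0 0] by simp

lemma prodS_altdef:
  "prodS sc F n a u b v =
     (\<Sum>j\<le>b. scD sc (of_nat (b choose j) * ((-1) ^ a * of_nat (falling_fact n (a + j))))
                 (Dpow (b - j) (F (n - (a + j)) u v)))"
proof -
  have coeff: "(of_int ((-1) ^ a * int (fact a * (n choose a) * (b choose j) * fact j * ((n - a) choose j))) :: complex)
      = of_nat (b choose j) * ((-1) ^ a * of_nat (falling_fact n (a + j)))" for j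
  proof -
    have "fact a * (n choose a) * (b choose j) * fact j * ((n - a) choose j) = (b choose j) * falling_fact n (a + j)"
      using falling_fact_add[of a n j] by (metis mult.assoc mult.commute mult.left_commute)
    then show ?thesis
      by (simp only: of_int_mult of_int_power of_int_minus of_int_1 of_int_of_nat_eq of_nat_mult)
        (simp add: mult_ac)
  qed
  show ?thesis
    unfolding prodS_def diff_diff_left coeff ..
qed

lemma prodS_zero_left [simp]: "prodS sc F n a 0 b v = 0"
  and prodS_zero_right [simp]: "prodS sc F n a u b 0 = 0"
  by (simp_all add: prodS_def)

lemma prodS_add_left: "prodS sc F n a (u + u') b v = prodS sc F n a u b v + prodS sc F n a u' b v"
  by (simp add: prodS_def F_add_left Dpow_add CD.scale_right_distrib sum.distrib)

lemma prodS_add_right: "prodS sc F n a u b (v + v') = prodS sc F n a u b v + prodS sc F n a u b v'"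
  by (simp add: prodS_def F_add_right Dpow_add CD.scale_right_distrib sum.distrib)

lemma prodS_scale_left: "prodS sc F n a (sc c u) b v = scD sc c (prodS sc F n a u b v)"
  by (simp add: prodS_def F_scale_left Dpow_scD CD.scale_sum_right mult.commute)

lemma prodS_scale_right: "prodS sc F n a u b (sc c v) = scD sc c (prodS sc F n a u b v)"
  by (simp add: prodS_def F_scale_right Dpow_scD CD.scale_sum_right mult.commute)

lemma prodS_CDS [simp]: "prodS sc F n a u b v \<in> CDS"
  by (simp add: prodS_def)

lemma prodS_Suc_left: "prodS sc F n (Suc a) u b v = scD sc (- of_nat n) (prodS sc F (n - 1) a u b v)"
  unfolding prodS_altdef CD.scale_sum_right
  by (rule sum.cong[OF refl]) (simp add: falling_fact_Suc_left algebra_simps diff_diff_left[symmetric])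

lemma prodS_Leibniz:
  "Dpow 1 (prodS sc F n a u b v) = prodS sc F n (Suc a) u b v + prodS sc F n a u (Suc b) v"
proof -
  define g where "g i j = scD sc ((-1) ^ a * of_nat (falling_fact n (a + j))) (Dpow i (F (n - (a + j)) u v))"
    for i j
  have "prodS sc F n a u (Suc b) v = (\<Sum>j\<le>Suc b. scD sc (of_nat (Suc b choose j)) (g (Suc b - j) j))"
    unfolding prodS_altdef g_def by simp
  also have "\<dots> = (\<Sum>j\<le>b. scD sc (of_nat (b choose j)) (g (Suc b - j) j))
                 + (\<Sum>j\<le>b. scD sc (of_nat (b choose j)) (g (b - j) (Suc j)))"
    by (rule CD.binomial_sum_Suc)
  also have "(\<Sum>j\<le>b. scD sc (of_nat (b choose j)) (g (Suc b - j) j)) = Dpow 1 (prodS sc F n a u b v)"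
    unfolding prodS_altdef Dpow_sum Dpow_scD g_def
    by (rule sum.cong[OF refl]) (simp add: Dpow_Dpow Suc_diff_le)
  also have "(\<Sum>j\<le>b. scD sc (of_nat (b choose j)) (g (b - j) (Suc j))) = - prodS sc F n (Suc a) u b v"
    unfolding prodS_altdef g_def sum_negf[symmetric]
    by (rule sum.cong[OF refl]) simp
  finally show ?thesis
    by (metis add.commute diff_add_cancel diff_conv_add_uminus)
qed

lemma prodD_eq_sum_lessThan:
  assumes "\<forall>a\<ge>N. A a = 0" "\<forall>b\<ge>M. B b = 0"
  shows "prodD sc F n A B = (\<Sum>a<N. \<Sum>b<M. prodS sc F n a (A a) b (B b))"
proof -
  have A: "{a. A a \<noteq> 0} \<subseteq> {..<N}" and B: "{b. B b \<noteq> 0} \<subseteq> {..<M}"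
    using assms by (auto simp: not_less[symmetric])
  have "(\<Sum>b\<in>{b. B b \<noteq> 0}. prodS sc F n a (A a) b (B b)) = (\<Sum>b<M. prodS sc F n a (A a) b (B b))" for a
    by (rule sum.mono_neutral_left) (use B in auto)
  then have "prodD sc F n A B = (\<Sum>a\<in>{a. A a \<noteq> 0}. \<Sum>b<M. prodS sc F n a (A a) b (B b))"
    unfolding prodD_def by simp
  also have "\<dots> = (\<Sum>a<N. \<Sum>b<M. prodS sc F n a (A a) b (B b))"
    by (rule sum.mono_neutral_left) (use A in auto)
  finally show ?thesis .
qed

lemma prodD_zero_left [simp]: "prodD sc F n 0 B = 0"
  and prodD_zero_right [simp]: "prodD sc F n A 0 = 0"
  and prodD_CDS [simp]: "prodD sc F n A B \<in> CDS"
  by (simp_all add: prodD_def)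

lemma prodD_add_left:
  assumes "A \<in> CDS" "A' \<in> CDS" "B \<in> CDS"
  shows "prodD sc F n (A + A') B = prodD sc F n A B + prodD sc F n A' B"
proof -
  obtain N where N: "\<forall>k\<ge>N. A k = 0" "\<forall>k\<ge>N. A' k = 0"
    using CDS_common_bound[OF assms(1,2)] by blast
  obtain M where M: "\<forall>k\<ge>M. B k = 0"
    using CDS_common_bound[OF assms(3,3)] by blast
  have N': "\<forall>k\<ge>N. (A + A') k = 0"
    using N by (simp add: plus_fun_apply)
  show ?thesis
    unfolding prodD_eq_sum_lessThan[OF N' M] prodD_eq_sum_lessThan[OF N(1) M]
      prodD_eq_sum_lessThan[OF N(2) M]
    by (simp add: plus_fun_apply prodS_add_left sum.distrib)
qed

lemma prodD_add_right:
  assumes "A \<in> CDS" "B \<in> CDS" "B' \<in> CDS"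
  shows "prodD sc F n A (B + B') = prodD sc F n A B + prodD sc F n A B'"
proof -
  obtain N where N: "\<forall>k\<ge>N. B k = 0" "\<forall>k\<ge>N. B' k = 0"
    using CDS_common_bound[OF assms(2,3)] by blast
  obtain M where M: "\<forall>k\<ge>M. A k = 0"
    using CDS_common_bound[OF assms(1,1)] by blast
  have N': "\<forall>k\<ge>N. (B + B') k = 0"
    using N by (simp add: plus_fun_apply)
  show ?thesis
    unfolding prodD_eq_sum_lessThan[OF M N'] prodD_eq_sum_lessThan[OF M N(1)]
      prodD_eq_sum_lessThan[OF M N(2)]
    by (simp add: plus_fun_apply prodS_add_right sum.distrib)
qed

lemma prodD_scale_left:
  assumes "A \<in> CDS" "B \<in> CDS"
  shows "prodD sc F n (scD sc c A) B = scD sc c (prodD sc F n A B)"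
proof -
  obtain N where N: "\<forall>k\<ge>N. A k = 0" "\<forall>k\<ge>N. B k = 0"
    using CDS_common_bound[OF assms] by blast
  then have N': "\<forall>k\<ge>N. scD sc c A k = 0"
    by (simp add: scD_apply)
  show ?thesis
    unfolding prodD_eq_sum_lessThan[OF N' N(2)] prodD_eq_sum_lessThan[OF N]
    by (simp add: prodS_scale_left CD.scale_sum_right scD_apply)
qed

lemma prodD_scale_right:
  assumes "A \<in> CDS" "B \<in> CDS"
  shows "prodD sc F n A (scD sc c B) = scD sc c (prodD sc F n A B)"
proof -
  obtain N where N: "\<forall>k\<ge>N. A k = 0" "\<forall>k\<ge>N. B k = 0"
    using CDS_common_bound[OF assms] by blast
  then have N': "\<forall>k\<ge>N. scD sc c B k = 0"
    by (simp add: scD_apply)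
  show ?thesis
    unfolding prodD_eq_sum_lessThan[OF N(1) N'] prodD_eq_sum_lessThan[OF N]
    by (simp add: prodS_scale_right CD.scale_sum_right scD_apply)
qed

lemma prodD_sum_left:
  assumes "\<And>i. i \<in> I \<Longrightarrow> f i \<in> CDS" "B \<in> CDS"
  shows "prodD sc F n (sum f I) B = (\<Sum>i\<in>I. prodD sc F n (f i) B)"
  using assms(1)
proof (induction I rule: infinite_finite_induct)
  case (insert x I)
  then show ?case
    by (simp add: prodD_add_left assms(2))
qed simp_all

lemma prodD_emb: "prodD sc F n (emb u) (emb v) = F n u v"
proof -
  have "\<forall>k\<ge>1. emb u k = 0" "\<forall>k\<ge>1. emb v k = 0"
    by (auto simp: emb_def)
  then show ?thesis
    by (simp only: prodD_eq_sum_lessThan) (simp add: prodS_def emb_def)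
qed

lemma prodD_Dpow1_left_eq_sum:
  assumes "\<forall>k\<ge>N. A k = 0" "\<forall>k\<ge>N. B k = 0"
  shows "prodD sc F n (Dpow 1 A) B = (\<Sum>a<N. \<Sum>b<N. prodS sc F n (Suc a) (A a) b (B b))"
proof -
  have "\<forall>k\<ge>Suc N. Dpow 1 A k = 0"
    using assms(1) by (auto simp: Dpow_def)
  then have "prodD sc F n (Dpow 1 A) B = (\<Sum>a<Suc N. (\<lambda>a x. \<Sum>b<N. prodS sc F n a x b (B b)) a (Dpow 1 A a))"
    using prodD_eq_sum_lessThan assms(2) by blast
  also have "\<dots> = (\<Sum>a<N. \<Sum>b<N. prodS sc F n (Suc a) (A a) b (B b))"
    by (rule sum_lessThan_Suc_Dpow1) (simp only: prodS_zero_left sum.neutral_const)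
  finally show ?thesis .
qed

lemma prodD_Dpow1_right_eq_sum:
  assumes "\<forall>k\<ge>N. A k = 0" "\<forall>k\<ge>N. B k = 0"
  shows "prodD sc F n A (Dpow 1 B) = (\<Sum>a<N. \<Sum>b<N. prodS sc F n a (A a) (Suc b) (B b))"
proof -
  have "\<forall>k\<ge>Suc N. Dpow 1 B k = 0"
    using assms(2) by (auto simp: Dpow_def)
  then have "prodD sc F n A (Dpow 1 B) = (\<Sum>a<N. \<Sum>b<Suc N. (\<lambda>b x. prodS sc F n a (A a) b x) b (Dpow 1 B b))"
    using prodD_eq_sum_lessThan[OF assms(1)] by simp
  also have "\<dots> = (\<Sum>a<N. \<Sum>b<N. prodS sc F n a (A a) (Suc b) (B b))"
    by (rule sum.cong[OF refl], rule sum_lessThan_Suc_Dpow1) (simp only: prodS_zero_right)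
  finally show ?thesis .
qed

lemma prodD_Dpow1_left:
  assumes "A \<in> CDS" "B \<in> CDS"
  shows "prodD sc F n (Dpow 1 A) B = scD sc (- of_nat n) (prodD sc F (n - 1) A B)"
proof -
  obtain N where N: "\<forall>k\<ge>N. A k = 0" "\<forall>k\<ge>N. B k = 0"
    using CDS_common_bound[OF assms] by blast
  show ?thesis
    unfolding prodD_Dpow1_left_eq_sum[OF N] prodD_eq_sum_lessThan[OF N] CD.scale_sum_right
      prodS_Suc_left ..
qed

lemma prodD_Leibniz:
  assumes "A \<in> CDS" "B \<in> CDS"
  shows "Dpow 1 (prodD sc F n A B) = prodD sc F n (Dpow 1 A) B + prodD sc F n A (Dpow 1 B)"
proof -
  obtain N where N: "\<forall>k\<ge>N. A k = 0" "\<forall>k\<ge>N. B k = 0"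
    using CDS_common_bound[OF assms] by blast
  show ?thesis
    unfolding prodD_Dpow1_left_eq_sum[OF N] prodD_Dpow1_right_eq_sum[OF N] prodD_eq_sum_lessThan[OF N]
      Dpow_sum prodS_Leibniz sum.distrib ..
qed

lemma prodD_Dpow_left:
  assumes "A \<in> CDS" "B \<in> CDS"
  shows "prodD sc F n (Dpow k A) B = scD sc ((-1) ^ k * of_nat (falling_fact n k)) (prodD sc F (n - k) A B)"
  using assms(1)
proof (induction k arbitrary: A)
  case 0
  then show ?case
    by (simp add: falling_fact_def)
next
  case (Suc k)
  have "prodD sc F n (Dpow (Suc k) A) B = prodD sc F n (Dpow k (Dpow 1 A)) B"
    by (simp add: Dpow_Dpow)
  also have "\<dots> = scD sc ((-1) ^ k * of_nat (falling_fact n k)) (prodD sc F (n - k) (Dpow 1 A) B)"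
    using Suc by simp
  also have "\<dots> = scD sc ((-1) ^ Suc k * of_nat (falling_fact n (Suc k))) (prodD sc F (n - Suc k) A B)"
    using prodD_Dpow1_left[OF Suc.prems assms(2)] by (simp add: falling_fact_Suc mult_ac)
  finally show ?case .
qed

lemma prodD_eventually_zero:
  assumes "A \<in> CDS" "B \<in> CDS"
  shows "\<exists>M. \<forall>n\<ge>M. prodD sc F n A B = 0"
proof -
  obtain N where N: "\<forall>k\<ge>N. A k = 0" "\<forall>k\<ge>N. B k = 0"
    using CDS_common_bound[OF assms] by blast
  have "\<forall>\<^sub>F n in sequentially. prodS sc F n a (A a) b (B b) = 0" for a b
  proof -
    obtain M where M: "\<forall>n\<ge>M. F n (A a) (B b) = 0"
      using F_eventually_zero by blast
    then have "\<forall>n\<ge>M + a + b. prodS sc F n a (A a) b (B b) = 0"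
      by (auto simp: prodS_altdef)
    then show ?thesis
      unfolding eventually_sequentially by blast
  qed
  then have "\<forall>\<^sub>F n in sequentially. \<forall>a\<in>{..<N}. \<forall>b\<in>{..<N}. prodS sc F n a (A a) b (B b) = 0"
    by (intro eventually_ball_finite ballI) auto
  then have "\<forall>\<^sub>F n in sequentially. prodD sc F n A B = 0"
    by eventually_elim (simp add: prodD_eq_sum_lessThan[OF N])
  then show ?thesis
    unfolding eventually_sequentially .
qed

lemma gen_ideal_subset: "G \<subseteq> gen_ideal sc F G"
  by (auto simp: gen_ideal_def)

lemma gen_ideal_least: "is_ideal sc F I \<Longrightarrow> G \<subseteq> I \<Longrightarrow> gen_ideal sc F G \<subseteq> I"
  by (auto simp: gen_ideal_def)

lemma gen_ideal_mono: "G \<subseteq> G' \<Longrightarrow> gen_ideal sc F G \<subseteq> gen_ideal sc F G'"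
  by (auto simp: gen_ideal_def)

lemma is_ideal_Inter:
  assumes "\<And>I. I \<in> \<I> \<Longrightarrow> is_ideal sc F I" "\<I> \<noteq> {}"
  shows "is_ideal sc F (\<Inter>\<I>)"
  using assms unfolding is_ideal_def by blast

lemma is_ideal_gen_ideal: "G \<subseteq> CDS \<Longrightarrow> is_ideal sc F (gen_ideal sc F G)"
  unfolding gen_ideal_def by (rule is_ideal_Inter) (auto simp: is_ideal_def)

lemma is_ideal_CDS: "is_ideal sc F I \<Longrightarrow> X \<in> I \<Longrightarrow> X \<in> CDS"
  by (auto simp: is_ideal_def)

lemma is_ideal_prodD:
  "is_ideal sc F I \<Longrightarrow> A \<in> CDS \<Longrightarrow> X \<in> I \<Longrightarrow> prodD sc F n A X \<in> I \<and> prodD sc F n X A \<in> I"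
  by (simp add: is_ideal_def)

lemma is_ideal_iff:
  "is_ideal sc F I \<longleftrightarrow> I \<subseteq> CDS \<and> CD.subspace I \<and>
     (\<forall>A\<in>CDS. \<forall>X\<in>I. \<forall>n. prodD sc F n A X \<in> I \<and> prodD sc F n X A \<in> I)"
  by (auto simp: is_ideal_def CD.subspace_def)

lemma is_ideal_span:
  assumes "G \<subseteq> CDS"
    and "\<And>A X n. A \<in> CDS \<Longrightarrow> X \<in> G \<Longrightarrow>
           prodD sc F n A X \<in> CD.span G \<and> prodD sc F n X A \<in> CD.span G"
  shows "is_ideal sc F (CD.span G)"
  unfolding is_ideal_iff
proof (intro conjI ballI allI CD.subspace_span)
  show "CD.span G \<subseteq> CDS"
    using assms(1) subspace_CDS by (rule CD.span_minimal)
  fix A X :: "nat \<Rightarrow> 'a" and n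
  assume A: "A \<in> CDS" and X: "X \<in> CD.span G"
  let ?T = "{X \<in> CDS. prodD sc F n A X \<in> CD.span G \<and> prodD sc F n X A \<in> CD.span G}"
  have "CD.subspace ?T"
    using A by (auto simp: CD.subspace_def prodD_add_left prodD_add_right prodD_scale_left
        prodD_scale_right CD.span_add CD.span_scale CD.span_zero)
  moreover have "G \<subseteq> ?T"
    using assms A by blast
  ultimately have "CD.span G \<subseteq> ?T"
    by (rule CD.span_minimal[rotated])
  then show "prodD sc F n A X \<in> CD.span G" "prodD sc F n X A \<in> CD.span G"
    using X by blast+
qed

definition grade :: "bool \<Rightarrow> 'a set" where
  "grade p = (if p then S1 else S0)"

definition homogeneous :: "bool \<Rightarrow> (nat \<Rightarrow> 'a) \<Rightarrow> bool" where
  "homogeneous p A \<longleftrightarrow> (\<forall>k. A k \<in> grade p)"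

lemma S0_Int_S1: "S0 \<inter> S1 = {0}"
  and S0_plus_S1: "\<exists>a\<in>S0. \<exists>b\<in>S1. x = a + b"
  using formula by (simp_all add: is_formula_def)

lemma subspace_grade: "S.subspace (grade p)"
  using formula by (simp add: grade_def is_formula_def)

lemma subspace_homogeneous: "CD.subspace {A. homogeneous p A}"
  unfolding CD.subspace_def homogeneous_def
  using S.subspace_0[OF subspace_grade] S.subspace_add[OF subspace_grade]
    S.subspace_scale[OF subspace_grade]
  by (simp add: scD_apply plus_fun_apply)
lemma homogeneous_sum: "(\<And>i. i \<in> I \<Longrightarrow> homogeneous p (f i)) \<Longrightarrow> homogeneous p (sum f I)"
  using CD.subspace_sum[OF subspace_homogeneous, of I f] by simp

lemma homogeneous_Sum_any: "(\<And>i. homogeneous p (f i)) \<Longrightarrow> homogeneous p (Sum_any f)"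
  unfolding Sum_any.expand_set by (rule homogeneous_sum)

lemma homogeneous_Dpow: "homogeneous p A \<Longrightarrow> homogeneous p (Dpow j A)"
  using S.subspace_0[OF subspace_grade] by (simp add: homogeneous_def Dpow_def)

lemma F_grade:
  assumes "u \<in> grade p" "v \<in> grade q"
  shows "F n u v k \<in> grade (p \<noteq> q)"
proof -
  have "\<forall>n u v. (u \<in> S0 \<and> v \<in> S0 \<longrightarrow> (\<forall>k. F n u v k \<in> S0)) \<and>
                (u \<in> S0 \<and> v \<in> S1 \<longrightarrow> (\<forall>k. F n u v k \<in> S1)) \<and>
                (u \<in> S1 \<and> v \<in> S0 \<longrightarrow> (\<forall>k. F n u v k \<in> S1)) \<and>
                (u \<in> S1 \<and> v \<in> S1 \<longrightarrow> (\<forall>k. F n u v k \<in> S0))"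
    using formula unfolding is_formula_def by blast
  then show ?thesis
    using assms by (cases p; cases q) (simp_all add: grade_def)
qed

lemma homogeneous_scale: "homogeneous p A \<Longrightarrow> homogeneous p (scD sc c A)"
  using CD.subspace_scale[OF subspace_homogeneous, of A p c] by simp

lemma homogeneous_prodD:
  assumes "homogeneous p A" "homogeneous q B"
  shows "homogeneous (p \<noteq> q) (prodD sc F n A B)"
proof -
  have "homogeneous (p \<noteq> q) (prodS sc F n a (A a) b (B b))" for a b
  proof -
    have "homogeneous (p \<noteq> q) (F j (A a) (B b))" for j
      using assms unfolding homogeneous_def by (blast intro: F_grade)
    then show ?thesis
      unfolding prodS_def by (intro homogeneous_sum homogeneous_scale homogeneous_Dpow)
  qed
  then show ?thesis
    unfolding prodD_def by (intro homogeneous_sum)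
qed

lemma homD_iff: "homD S0 S1 A \<longleftrightarrow> A \<in> CDS \<and> (\<exists>p. homogeneous p A)"
  by (auto simp: homD_def homogeneous_def grade_def ex_bool_eq)

lemma homD_Dpow: "homD S0 S1 X \<Longrightarrow> homD S0 S1 (Dpow j X)"
  unfolding homD_iff using homogeneous_Dpow CDS_Dpow by blast

lemma homD_emb:
  assumes "u \<in> S0 \<union> S1"
  shows "homD S0 S1 (emb u)"
proof -
  have "u \<in> grade (u \<in> S1)"
    using assms by (auto simp: grade_def)
  then have "homogeneous (u \<in> S1) (emb u)"
    using S.subspace_0[OF subspace_grade] by (simp add: homogeneous_def emb_def)
  then show ?thesis
    by (auto simp: homD_iff)
qed

lemma homD_decomp:
  assumes "A \<in> CDS"
  obtains A0 A1 where "A = A0 + A1" "homD S0 S1 A0" "homD S0 S1 A1"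
proof -
  define e where "e x = (SOME a. a \<in> S0 \<and> x - a \<in> S1)" for x
  have e: "e x \<in> S0 \<and> x - e x \<in> S1" for x
  proof -
    obtain a b where "a \<in> S0" "b \<in> S1" "x = a + b"
      using S0_plus_S1 by blast
    then have "\<exists>a. a \<in> S0 \<and> x - a \<in> S1"
      by (metis add_diff_cancel_left')
    then show ?thesis
      unfolding e_def by (rule someI_ex)
  qed
  have "e 0 = 0"
  proof -
    have "e 0 \<in> S1"
      using e[of 0] S.subspace_neg[OF subspace_grade[of True]] by (fastforce simp: grade_def)
    then show ?thesis
      using e[of 0] S0_Int_S1 by blast
  qed
  then have "(\<lambda>k. e (A k)) \<in> CDS" "(\<lambda>k. A k - e (A k)) \<in> CDS"
    using assms unfolding CDS_iff_eventually_zero by (auto elim: eventually_mono)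
  moreover have "A = (\<lambda>k. e (A k)) + (\<lambda>k. A k - e (A k))"
    by (simp add: fun_eq_iff plus_fun_apply)
  ultimately show ?thesis
    using that e unfolding homD_def by blast
qed

lemma epsD_commute: "epsD S1 X Y = epsD S1 Y X"
  by (auto simp: epsD_def)

lemma epsD_mult_self: "epsD S1 X Y * epsD S1 X Y = 1"
  by (simp add: epsD_def)

lemma epsD_Dpow_left: "epsD S1 (Dpow j X) Y = epsD S1 X Y"
proof -
  have "(\<forall>k. Dpow j X k \<in> S1) \<longleftrightarrow> (\<forall>k. X k \<in> S1)"
  proof
    assume "\<forall>k. Dpow j X k \<in> S1"
    then have "Dpow j X (k + j) \<in> S1" for k
      by blast
    then show "\<forall>k. X k \<in> S1"
      by (simp add: Dpow_def)
  next
    assume "\<forall>k. X k \<in> S1"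
    then show "\<forall>k. Dpow j X k \<in> S1"
      using homogeneous_Dpow[of True X j] by (simp add: homogeneous_def grade_def)
  qed
  then show ?thesis
    by (simp add: epsD_def)
qed

lemma epsD_Dpow_right: "epsD S1 X (Dpow j Y) = epsD S1 X Y"
  using epsD_Dpow_left epsD_commute by metis

lemma jacobi_elt_CDS [simp]: "jacobi_elt sc S1 F m n X Y Z \<in> CDS"
  by (simp add: jacobi_elt_def)

lemma skew_elt_CDS [simp]: "skew_elt sc S1 F n X Y \<in> CDS"
  by (simp add: skew_elt_def)

lemma jacobi_gens_CDS: "jacobi_gens sc S0 S1 F \<subseteq> CDS"
  and skew_gens_CDS: "skew_gens sc S0 S1 F \<subseteq> CDS"
  by (auto simp: jacobi_gens_def skew_gens_def)

abbreviation jacobi_ideal :: "(nat \<Rightarrow> 'a) set" where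
  "jacobi_ideal \<equiv> gen_ideal sc F (jacobi_gens sc S0 S1 F)"

lemma is_ideal_jacobi_ideal: "is_ideal sc F jacobi_ideal"
  using jacobi_gens_CDS by (rule is_ideal_gen_ideal)

lemma subspace_jacobi_ideal: "CD.subspace jacobi_ideal"
  using is_ideal_jacobi_ideal by (simp add: is_ideal_iff)

lemma jacobi_elt_in_jacobi_ideal:
  "homD S0 S1 X \<Longrightarrow> homD S0 S1 Y \<Longrightarrow> homD S0 S1 Z \<Longrightarrow> jacobi_elt sc S1 F m n X Y Z \<in> jacobi_ideal"
  using gen_ideal_subset[of "jacobi_gens sc S0 S1 F"] unfolding jacobi_gens_def by blast

section \<open>Stability of the Jacobi ideal under \<open>D\<close>\<close>

lemma Dpow1_jacobi_elt:
  assumes "X \<in> CDS" "Y \<in> CDS" "Z \<in> CDS"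
  shows "Dpow 1 (jacobi_elt sc S1 F m n X Y Z) = jacobi_elt sc S1 F m n (Dpow 1 X) Y Z
     + jacobi_elt sc S1 F m n X (Dpow 1 Y) Z + jacobi_elt sc S1 F m n X Y (Dpow 1 Z)"
  unfolding jacobi_elt_def using assms
  by (simp add: Dpow_diff Dpow_add Dpow_scD Dpow_sum prodD_Leibniz prodD_add_left prodD_add_right
      CD.scale_right_distrib sum.distrib epsD_Dpow_left epsD_Dpow_right del: One_nat_def)

lemma Dpow1_jacobi_gens:
  assumes "J \<in> jacobi_gens sc S0 S1 F"
  shows "Dpow 1 J \<in> jacobi_ideal"
proof -
  obtain m n X Y Z where J: "J = jacobi_elt sc S1 F m n X Y Z"
    and hom: "homD S0 S1 X" "homD S0 S1 Y" "homD S0 S1 Z"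
    using assms unfolding jacobi_gens_def by blast
  then have "X \<in> CDS" "Y \<in> CDS" "Z \<in> CDS"
    by (auto simp: homD_def)
  then show ?thesis
    unfolding J Dpow1_jacobi_elt[OF \<open>X \<in> CDS\<close> \<open>Y \<in> CDS\<close> \<open>Z \<in> CDS\<close>]
    using hom by (intro CD.subspace_add[OF subspace_jacobi_ideal] jacobi_elt_in_jacobi_ideal homD_Dpow)
qed

lemma jacobi_ideal_Dpow1:
  assumes "X \<in> jacobi_ideal"
  shows "Dpow 1 X \<in> jacobi_ideal"
proof -
  let ?T = "{X \<in> jacobi_ideal. Dpow 1 X \<in> jacobi_ideal}"
  have "is_ideal sc F ?T"
    unfolding is_ideal_iff
  proof (intro conjI ballI allI)
    show "?T \<subseteq> CDS"
      using is_ideal_CDS[OF is_ideal_jacobi_ideal] by blast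
    show "CD.subspace ?T"
      using subspace_jacobi_ideal
      by (auto simp: CD.subspace_def Dpow_add Dpow_scD)
    fix A X :: "nat \<Rightarrow> 'a" and n
    assume A: "A \<in> CDS" and X: "X \<in> ?T"
    then have XC: "X \<in> CDS"
      using is_ideal_CDS[OF is_ideal_jacobi_ideal] by blast
    show "prodD sc F n A X \<in> ?T" "prodD sc F n X A \<in> ?T"
      using A X is_ideal_prodD[OF is_ideal_jacobi_ideal] CD.subspace_add[OF subspace_jacobi_ideal]
      by (simp_all add: prodD_Leibniz[OF A XC] prodD_Leibniz[OF XC A] del: One_nat_def)
  qed
  moreover have "jacobi_gens sc S0 S1 F \<subseteq> ?T"
    using gen_ideal_subset[of "jacobi_gens sc S0 S1 F"] Dpow1_jacobi_gens by blast
  ultimately show ?thesis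
    using gen_ideal_least assms by blast
qed

lemma jacobi_ideal_Dpow:
  assumes "X \<in> jacobi_ideal"
  shows "Dpow k X \<in> jacobi_ideal"
proof (induction k)
  case 0
  then show ?case
    using assms by simp
next
  case (Suc k)
  then show ?case
    using jacobi_ideal_Dpow1[OF Suc] Dpow_Dpow[of 1 k X] by simp
qed

section \<open>Products with skew-symmetry elements\<close>

(* For n = 0 this is the right-hand side of the Jacobi identity for X_a (Y_b Z). *)
definition jacobi_rhs ::
  "(nat \<Rightarrow> 'a) \<Rightarrow> (nat \<Rightarrow> 'a) \<Rightarrow> (nat \<Rightarrow> 'a) \<Rightarrow> nat \<Rightarrow> nat \<Rightarrow> nat \<Rightarrow> (nat \<Rightarrow> 'a)" where
  "jacobi_rhs X Y Z n a b =
     (\<Sum>k\<le>a. scD sc (of_nat (a choose k)) (prodD sc F (a - k + b) (prodD sc F (n + k) X Y) Z))"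

definition skew_rhs ::
  "(nat \<Rightarrow> 'a) \<Rightarrow> (nat \<Rightarrow> 'a) \<Rightarrow> (nat \<Rightarrow> 'a) \<Rightarrow> nat \<Rightarrow> nat \<Rightarrow> nat \<Rightarrow> (nat \<Rightarrow> 'a)" where
  "skew_rhs X Y Z n a b =
     jacobi_rhs X Y Z n a b + scD sc (epsD S1 X Y * (-1) ^ n) (jacobi_rhs Y X Z n b a)"

lemma jacobi_rhs_Suc:
  "jacobi_rhs X Y Z n (Suc a) b = jacobi_rhs X Y Z n a (Suc b) + jacobi_rhs X Y Z (Suc n) a b"
proof -
  define g where "g i k = prodD sc F (i + b) (prodD sc F (n + k) X Y) Z" for i k
  have "jacobi_rhs X Y Z n (Suc a) b = (\<Sum>k\<le>Suc a. scD sc (of_nat (Suc a choose k)) (g (Suc a - k) k))"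
    unfolding jacobi_rhs_def g_def ..
  also have "\<dots> = (\<Sum>k\<le>a. scD sc (of_nat (a choose k)) (g (Suc a - k) k))
                 + (\<Sum>k\<le>a. scD sc (of_nat (a choose k)) (g (a - k) (Suc k)))"
    by (rule CD.binomial_sum_Suc)
  also have "\<dots> = jacobi_rhs X Y Z n a (Suc b) + jacobi_rhs X Y Z (Suc n) a b"
    unfolding jacobi_rhs_def g_def
    by (intro arg_cong2[where f = "(+)"] sum.cong refl) (auto simp: Suc_diff_le)
  finally show ?thesis .
qed

lemma skew_rhs_Suc: "skew_rhs X Y Z (Suc n) a b = skew_rhs X Y Z n (Suc a) b - skew_rhs X Y Z n a (Suc b)"
proof -
  have X: "jacobi_rhs X Y Z (Suc n) a b = jacobi_rhs X Y Z n (Suc a) b - jacobi_rhs X Y Z n a (Suc b)"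
    and Y: "jacobi_rhs Y X Z (Suc n) b a = jacobi_rhs Y X Z n (Suc b) a - jacobi_rhs Y X Z n b (Suc a)"
    using jacobi_rhs_Suc by (simp_all add: algebra_simps)
  show ?thesis
    unfolding skew_rhs_def X Y by (simp add: CD.scale_right_diff_distrib algebra_simps)
qed

lemma skew_rhs_0:
  "skew_rhs X Y Z 0 a b =
     - (jacobi_elt sc S1 F a b X Y Z + scD sc (epsD S1 X Y) (jacobi_elt sc S1 F b a Y X Z))"
proof -
  have "jacobi_rhs X Y Z 0 a b =
      (\<Sum>i\<le>a. scD sc (of_nat (a choose i)) (prodD sc F (b + a - i) (prodD sc F i X Y) Z))"
    and "jacobi_rhs Y X Z 0 b a =
      (\<Sum>i\<le>b. scD sc (of_nat (b choose i)) (prodD sc F (a + b - i) (prodD sc F i Y X) Z))"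
    unfolding jacobi_rhs_def by (auto intro: sum.cong simp: add.commute)
  then show ?thesis
    unfolding skew_rhs_def jacobi_elt_def epsD_commute[of Y X]
    by (simp add: CD.scale_right_diff_distrib CD.scale_right_distrib epsD_mult_self algebra_simps)
qed

lemma skew_rhs_in_jacobi_ideal:
  assumes "homD S0 S1 X" "homD S0 S1 Y" "homD S0 S1 Z"
  shows "skew_rhs X Y Z n a b \<in> jacobi_ideal"
proof (induction n arbitrary: a b)
  case 0
  show ?case
    unfolding skew_rhs_0 using assms
    by (intro CD.subspace_neg[OF subspace_jacobi_ideal] CD.subspace_add[OF subspace_jacobi_ideal]
        CD.subspace_scale[OF subspace_jacobi_ideal] jacobi_elt_in_jacobi_ideal)
next
  case (Suc n)
  then show ?case
    unfolding skew_rhs_Suc by (intro CD.subspace_diff[OF subspace_jacobi_ideal])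
qed

definition skew_tail :: "nat \<Rightarrow> (nat \<Rightarrow> 'a) \<Rightarrow> (nat \<Rightarrow> 'a) \<Rightarrow> (nat \<Rightarrow> 'a)" where
  "skew_tail n X Y = (\<Sum>k. scD sc ((-1) ^ (n + k) / of_nat (fact k)) (Dpow k (prodD sc F (n + k) Y X)))"

lemma skew_elt_eq: "skew_elt sc S1 F n X Y = prodD sc F n X Y + scD sc (epsD S1 X Y) (skew_tail n X Y)"
  unfolding skew_elt_def skew_tail_def ..

lemma skew_tail_CDS [simp]: "skew_tail n X Y \<in> CDS"
  by (simp add: skew_tail_def)

lemma finite_skew_tail_support:
  assumes "X \<in> CDS" "Y \<in> CDS"
  shows "finite {k. scD sc (c k) (Dpow k (prodD sc F (n + k) Y X)) \<noteq> 0}"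
proof -
  obtain M where "\<forall>p\<ge>M. prodD sc F p Y X = 0"
    using prodD_eventually_zero[OF assms(2,1)] by blast
  then have "{k. scD sc (c k) (Dpow k (prodD sc F (n + k) Y X)) \<noteq> 0} \<subseteq> {..<M}"
    by (auto simp: not_less[symmetric])
  then show ?thesis
    using finite_subset by blast
qed

lemma prodD_Sum_any_left:
  assumes "finite {k. g k \<noteq> 0}" "\<And>k. g k \<in> CDS" "Z \<in> CDS"
  shows "prodD sc F m (Sum_any g) Z = (\<Sum>k. prodD sc F m (g k) Z)"
proof -
  have "prodD sc F m (Sum_any g) Z = (\<Sum>k | g k \<noteq> 0. prodD sc F m (g k) Z)"
    unfolding Sum_any.expand_set using assms(2,3) by (rule prodD_sum_left)
  also have "\<dots> = (\<Sum>k. prodD sc F m (g k) Z)"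
    by (rule Sum_any.expand_superset[symmetric]) (use assms in auto)
  finally show ?thesis .
qed

lemma prodD_skew_tail_left:
  assumes "X \<in> CDS" "Y \<in> CDS" "Z \<in> CDS"
  shows "prodD sc F m (skew_tail n X Y) Z = scD sc ((-1) ^ n) (jacobi_rhs Y X Z n m 0)"
proof -
  define B where "B k = prodD sc F (n + k) Y X" for k
  define g where "g k = scD sc ((-1) ^ (n + k) / of_nat (fact k)) (Dpow k (B k))" for k
  have "prodD sc F m (skew_tail n X Y) Z = (\<Sum>k. prodD sc F m (g k) Z)"
    unfolding skew_tail_def B_def[symmetric] g_def[symmetric]
    using finite_skew_tail_support[OF assms(1,2)] assms(3)
    by (intro prodD_Sum_any_left) (simp_all add: g_def B_def)
  also have "\<dots> = (\<Sum>k. scD sc ((-1) ^ n * of_nat (m choose k)) (prodD sc F (m - k) (B k) Z))"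
    unfolding g_def B_def
      prodD_scale_left[OF CDS_Dpow[OF prodD_CDS] assms(3)] prodD_Dpow_left[OF prodD_CDS assms(3)]
      CD.scale_scale skew_coeff_falling_fact ..
  also have "\<dots> = (\<Sum>k\<le>m. scD sc ((-1) ^ n * of_nat (m choose k)) (prodD sc F (m - k) (B k) Z))"
    by (rule Sum_any.expand_superset) (auto simp: binomial_eq_0 not_le[symmetric])
  also have "\<dots> = scD sc ((-1) ^ n) (jacobi_rhs Y X Z n m 0)"
    unfolding jacobi_rhs_def CD.scale_sum_right B_def by simp
  finally show ?thesis .
qed

lemma prodD_skew_elt_left:
  assumes "X \<in> CDS" "Y \<in> CDS" "Z \<in> CDS"
  shows "prodD sc F m (skew_elt sc S1 F n X Y) Z = skew_rhs X Y Z n 0 m"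
  unfolding skew_elt_eq skew_rhs_def using assms
  by (simp add: prodD_add_left prodD_scale_left prodD_skew_tail_left jacobi_rhs_def)

lemma prodD_skew_elt_left_in_jacobi_ideal:
  assumes "homD S0 S1 X" "homD S0 S1 Y" "homD S0 S1 Z"
  shows "prodD sc F m (skew_elt sc S1 F n X Y) Z \<in> jacobi_ideal"
  using skew_rhs_in_jacobi_ideal[OF assms] assms prodD_skew_elt_left by (simp add: homD_def)

abbreviation jacobi_skew_ideal :: "(nat \<Rightarrow> 'a) set" where
  "jacobi_skew_ideal \<equiv> gen_ideal sc F (jacobi_gens sc S0 S1 F \<union> skew_gens sc S0 S1 F)"

lemma homD_skew_elt:
  assumes "homD S0 S1 X" "homD S0 S1 Y"
  shows "homD S0 S1 (skew_elt sc S1 F n X Y)"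
proof -
  obtain p q where X: "homogeneous p X" and Y: "homogeneous q Y"
    using assms by (auto simp: homD_iff)
  have "homogeneous (p \<noteq> q) (prodD sc F k X Y)" "homogeneous (p \<noteq> q) (prodD sc F k Y X)" for k
    using homogeneous_prodD[OF X Y] homogeneous_prodD[OF Y X, of k] by (simp_all add: eq_commute)
  then have "homogeneous (p \<noteq> q) (skew_elt sc S1 F n X Y)"
    unfolding skew_elt_def
    by (intro CD.subspace_add[OF subspace_homogeneous, simplified] homogeneous_scale
        homogeneous_Sum_any homogeneous_Dpow)
  then show ?thesis
    by (auto simp: homD_iff)
qed

lemma skew_tail_in_jacobi_ideal:
  assumes "\<And>k. prodD sc F (n + k) Y X \<in> jacobi_ideal"
  shows "skew_tail n X Y \<in> jacobi_ideal"
  unfolding skew_tail_def Sum_any.expand_set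
  by (intro CD.subspace_sum[OF subspace_jacobi_ideal] CD.subspace_scale[OF subspace_jacobi_ideal]
      jacobi_ideal_Dpow assms)

lemma prodD_skew_elt_right_in_span:
  assumes "homD S0 S1 Z" "homD S0 S1 X" "homD S0 S1 Y"
  shows "prodD sc F m Z (skew_elt sc S1 F n X Y) \<in> CD.span (jacobi_ideal \<union> skew_gens sc S0 S1 F)"
proof -
  define S where "S = skew_elt sc S1 F n X Y"
  have "homD S0 S1 S"
    unfolding S_def using assms(2,3) by (rule homD_skew_elt)
  then have "skew_elt sc S1 F m Z S \<in> skew_gens sc S0 S1 F"
    using assms(1) by (auto simp: skew_gens_def)
  moreover have "skew_tail m Z S \<in> jacobi_ideal"
    unfolding S_def using assms by (intro skew_tail_in_jacobi_ideal prodD_skew_elt_left_in_jacobi_ideal)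
  moreover have "prodD sc F m Z S = skew_elt sc S1 F m Z S - scD sc (epsD S1 Z S) (skew_tail m Z S)"
    by (simp add: skew_elt_eq)
  ultimately show ?thesis
    unfolding S_def[symmetric]
    by (metis CD.span_diff CD.span_scale CD.span_base UnI1 UnI2)
qed

lemma prodD_skew_gens_in_span:
  assumes A: "A \<in> CDS" and G: "G \<in> skew_gens sc S0 S1 F"
  shows "prodD sc F n A G \<in> CD.span (jacobi_ideal \<union> skew_gens sc S0 S1 F) \<and>
         prodD sc F n G A \<in> CD.span (jacobi_ideal \<union> skew_gens sc S0 S1 F)"
proof -
  obtain m X Y where G: "G = skew_elt sc S1 F m X Y" and hom: "homD S0 S1 X" "homD S0 S1 Y"
    using G unfolding skew_gens_def by blast
  obtain A0 A1 where A01: "A = A0 + A1" "homD S0 S1 A0" "homD S0 S1 A1"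
    using homD_decomp[OF A] by blast
  then have "A0 \<in> CDS" "A1 \<in> CDS"
    by (auto simp: homD_def)
  then have "prodD sc F n A G = prodD sc F n A0 G + prodD sc F n A1 G"
    and "prodD sc F n G A = prodD sc F n G A0 + prodD sc F n G A1"
    unfolding A01(1) by (simp_all add: prodD_add_left prodD_add_right G)
  moreover have "prodD sc F n G A0 \<in> jacobi_ideal" "prodD sc F n G A1 \<in> jacobi_ideal"
    unfolding G using hom A01 by (auto intro: prodD_skew_elt_left_in_jacobi_ideal)
  ultimately show ?thesis
    unfolding G using hom A01
    by (auto intro!: CD.span_add prodD_skew_elt_right_in_span intro: CD.span_base)
qed

lemma jacobi_skew_ideal_subset_span:
  "jacobi_skew_ideal \<subseteq> CD.span (jacobi_ideal \<union> skew_gens sc S0 S1 F)"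
proof (rule gen_ideal_least)
  have "jacobi_ideal \<union> skew_gens sc S0 S1 F \<subseteq> CDS"
    using is_ideal_CDS[OF is_ideal_jacobi_ideal] skew_gens_CDS by blast
  then show "is_ideal sc F (CD.span (jacobi_ideal \<union> skew_gens sc S0 S1 F))"
  proof (rule is_ideal_span)
    fix A X :: "nat \<Rightarrow> 'a" and n
    assume "A \<in> CDS" "X \<in> jacobi_ideal \<union> skew_gens sc S0 S1 F"
    then show "prodD sc F n A X \<in> CD.span (jacobi_ideal \<union> skew_gens sc S0 S1 F) \<and>
               prodD sc F n X A \<in> CD.span (jacobi_ideal \<union> skew_gens sc S0 S1 F)"
      using is_ideal_prodD[OF is_ideal_jacobi_ideal] prodD_skew_gens_in_span
      by (auto intro: CD.span_base)
  qed
  show "jacobi_gens sc S0 S1 F \<union> skew_gens sc S0 S1 F \<subseteq> CD.span (jacobi_ideal \<union> skew_gens sc S0 S1 F)"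
    using gen_ideal_subset[of "jacobi_gens sc S0 S1 F"] CD.span_superset by blast
qed

section \<open>Constant terms\<close>

lemma skew_tail_at_0:
  assumes "X \<in> CDS" "Y \<in> CDS"
  shows "skew_tail n X Y 0 = sc ((-1) ^ n) (prodD sc F n Y X 0)"
proof -
  define g where "g k = scD sc ((-1) ^ (n + k) / of_nat (fact k)) (Dpow k (prodD sc F (n + k) Y X))" for k
  have fin: "finite {k. g k \<noteq> 0}"
    unfolding g_def using assms by (rule finite_skew_tail_support)
  have g0: "g k 0 = (if k = 0 then sc ((-1) ^ n) (prodD sc F n Y X 0) else 0)" for k
    by (simp add: g_def scD_apply Dpow_at_0)
  have "skew_tail n X Y 0 = (\<Sum>k | g k \<noteq> 0. g k 0)"
    unfolding skew_tail_def g_def[symmetric] Sum_any.expand_set sum_fun_apply ..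
  also have "\<dots> = (if g 0 \<noteq> 0 then sc ((-1) ^ n) (prodD sc F n Y X 0) else 0)"
    unfolding g0 using fin by (simp add: sum.delta)
  also have "\<dots> = sc ((-1) ^ n) (prodD sc F n Y X 0)"
    using g0[of 0] by auto
  finally show ?thesis .
qed

lemma skew_elt_at_0:
  assumes "X \<in> CDS" "Y \<in> CDS"
  shows "skew_elt sc S1 F n X Y 0 = prodD sc F n X Y 0 + sc (epsD S1 X Y * (-1) ^ n) (prodD sc F n Y X 0)"
  by (simp add: skew_elt_eq plus_fun_apply scD_apply skew_tail_at_0[OF assms])

lemma prodS_at_0:
  "prodS sc F n a u b v 0 = sc ((-1) ^ a * of_nat (falling_fact n (a + b))) (F (n - (a + b)) u v 0)"
proof -
  have "prodS sc F n a u b v 0 =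
      (\<Sum>j\<le>b. if j = b then sc ((-1) ^ a * of_nat (falling_fact n (a + j))) (F (n - (a + j)) u v 0) else 0)"
    unfolding prodS_altdef sum_fun_apply by (intro sum.cong refl) (auto simp: scD_apply Dpow_at_0)
  then show ?thesis
    by simp
qed

definition skew_symmetric_mod_D :: bool where
  "skew_symmetric_mod_D \<longleftrightarrow>
     (\<forall>u v n. u \<in> S0 \<union> S1 \<and> v \<in> S0 \<union> S1 \<longrightarrow>
        prodD sc F n (emb u) (emb v)
        + scD sc (epsD S1 (emb u) (emb v) * (-1) ^ n) (prodD sc F n (emb v) (emb u)) \<in> DCDS)"

lemma skew_symmetric_mod_D_iff:
  "skew_symmetric_mod_D \<longleftrightarrow>
     (\<forall>u v n. u \<in> S0 \<union> S1 \<and> v \<in> S0 \<union> S1 \<longrightarrow> skew_elt sc S1 F n (emb u) (emb v) 0 = 0)"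
  by (simp add: skew_symmetric_mod_D_def DCDS_def skew_elt_at_0 prodD_emb plus_fun_apply scD_apply)

lemma epsD_emb_component:
  assumes "homD S0 S1 X" "homD S0 S1 Y" "X a \<noteq> 0" "Y b \<noteq> 0"
  shows "epsD S1 (emb (X a)) (emb (Y b)) = epsD S1 X Y"
proof -
  have "(\<forall>k. emb (Z c) k \<in> S1) \<longleftrightarrow> (\<forall>k. Z k \<in> S1)" if "homD S0 S1 Z" "Z c \<noteq> 0" for Z c
    using that S0_Int_S1 S.subspace_0[OF subspace_grade[of True]]
    unfolding homD_def emb_def grade_def by (metis IntI singletonD)
  then show ?thesis
    using assms by (simp add: epsD_def)
qed

lemma prodS_skew_at_0:
  assumes "skew_symmetric_mod_D" "homD S0 S1 X" "homD S0 S1 Y"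
  shows "prodS sc F n a (X a) b (Y b) 0
         + sc (epsD S1 X Y * (-1) ^ n) (prodS sc F n b (Y b) a (X a) 0) = 0"
proof (cases "a + b \<le> n \<and> X a \<noteq> 0 \<and> Y b \<noteq> 0")
  case False
  then show ?thesis
    by (auto simp: prodS_at_0 falling_fact_def binomial_eq_0)
next
  case True
  define p where "p = n - (a + b)"
  define c :: complex where "c = (-1) ^ a * of_nat (falling_fact n (a + b))"
  have n: "n = p + a + b"
    using True by (simp add: p_def)
  have "(-1) ^ n * (-1) ^ b = ((-1) ^ a * (-1) ^ p :: complex)"
    unfolding n by (rule minus_one_power_add_right)
  then have sign: "epsD S1 X Y * (-1) ^ n * ((-1) ^ b * of_nat (falling_fact n (a + b)))
      = c * (epsD S1 X Y * (-1) ^ p)"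
    by (simp add: c_def mult_ac)
  have "X a \<in> S0 \<union> S1" "Y b \<in> S0 \<union> S1"
    using assms(2,3) by (auto simp: homD_def)
  then have "skew_elt sc S1 F p (emb (X a)) (emb (Y b)) 0 = 0"
    using assms(1) unfolding skew_symmetric_mod_D_iff by blast
  then have "F p (X a) (Y b) 0 + sc (epsD S1 X Y * (-1) ^ p) (F p (Y b) (X a) 0) = 0"
    using epsD_emb_component[OF assms(2,3)] True by (simp add: skew_elt_at_0 prodD_emb)
  then have "sc c (F p (X a) (Y b) 0 + sc (epsD S1 X Y * (-1) ^ p) (F p (Y b) (X a) 0)) = 0"
    by simp
  moreover have "prodS sc F n a (X a) b (Y b) 0 = sc c (F p (X a) (Y b) 0)"
    by (simp add: prodS_at_0 c_def p_def)
  moreover have "prodS sc F n b (Y b) a (X a) 0 =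
      sc ((-1) ^ b * of_nat (falling_fact n (a + b))) (F p (Y b) (X a) 0)"
    by (simp add: prodS_at_0 p_def add.commute)
  ultimately show ?thesis
    by (simp only: S.scale_right_distrib S.scale_scale sign)
qed

lemma skew_elt_at_0_eq_0:
  assumes "skew_symmetric_mod_D" "homD S0 S1 X" "homD S0 S1 Y"
  shows "skew_elt sc S1 F n X Y 0 = 0"
proof -
  have C: "X \<in> CDS" "Y \<in> CDS"
    using assms(2,3) by (auto simp: homD_def)
  obtain N where N: "\<forall>k\<ge>N. X k = 0" "\<forall>k\<ge>N. Y k = 0"
    using CDS_common_bound[OF C] by blast
  have "skew_elt sc S1 F n X Y 0 = (\<Sum>a<N. \<Sum>b<N. prodS sc F n a (X a) b (Y b) 0) +
      sc (epsD S1 X Y * (-1) ^ n) (\<Sum>b<N. \<Sum>a<N. prodS sc F n b (Y b) a (X a) 0)"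
    unfolding skew_elt_at_0[OF C] prodD_eq_sum_lessThan[OF N] prodD_eq_sum_lessThan[OF N(2,1)]
      sum_fun_apply ..
  also have "\<dots> = (\<Sum>a<N. \<Sum>b<N. prodS sc F n a (X a) b (Y b) 0
                    + sc (epsD S1 X Y * (-1) ^ n) (prodS sc F n b (Y b) a (X a) 0))"
    by (subst sum.swap[of _ _ "{..<N}"]) (simp add: S.scale_sum_right sum.distrib)
  also have "\<dots> = 0"
    using prodS_skew_at_0[OF assms] by simp
  finally show ?thesis .
qed

lemma subspace_DCDS: "CD.subspace DCDS"
  by (auto simp: CD.subspace_def DCDS_def plus_fun_apply scD_apply)

lemma jacobi_skew_ideal_subset_DCDS_iff:
  "jacobi_skew_ideal \<subseteq> DCDS \<longleftrightarrow> jacobi_ideal \<subseteq> DCDS \<and> skew_symmetric_mod_D"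
proof
  assume sub: "jacobi_skew_ideal \<subseteq> DCDS"
  have skew: "skew_gens sc S0 S1 F \<subseteq> DCDS"
    using sub gen_ideal_subset by blast
  show "jacobi_ideal \<subseteq> DCDS \<and> skew_symmetric_mod_D"
  proof
    show "jacobi_ideal \<subseteq> DCDS"
      using sub gen_ideal_mono[of "jacobi_gens sc S0 S1 F"] by blast
    show "skew_symmetric_mod_D"
      unfolding skew_symmetric_mod_D_iff
    proof (intro allI impI)
      fix u v n
      assume "u \<in> S0 \<union> S1 \<and> v \<in> S0 \<union> S1"
      then have "skew_elt sc S1 F n (emb u) (emb v) \<in> skew_gens sc S0 S1 F"
        unfolding skew_gens_def using homD_emb by blast
      then show "skew_elt sc S1 F n (emb u) (emb v) 0 = 0"
        using skew by (auto simp: DCDS_def)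
    qed
  qed
next
  assume "jacobi_ideal \<subseteq> DCDS \<and> skew_symmetric_mod_D"
  moreover have "skew_gens sc S0 S1 F \<subseteq> DCDS" if "skew_symmetric_mod_D"
    using skew_elt_at_0_eq_0[OF that] by (auto simp: skew_gens_def DCDS_def)
  ultimately have "CD.span (jacobi_ideal \<union> skew_gens sc S0 S1 F) \<subseteq> DCDS"
    by (intro CD.span_minimal subspace_DCDS) auto
  then show "jacobi_skew_ideal \<subseteq> DCDS"
    using jacobi_skew_ideal_subset_span by blast
qed

end

theorem proposition7p8:
  fixes sc :: "complex \<Rightarrow> 'a::ab_group_add \<Rightarrow> 'a"
    and S0 S1 :: "'a set"
    and F :: "nat \<Rightarrow> 'a \<Rightarrow> 'a \<Rightarrow> (nat \<Rightarrow> 'a)"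
  assumes "is_formula sc S0 S1 F"
  shows "(gen_ideal sc F (jacobi_gens sc S0 S1 F \<union> skew_gens sc S0 S1 F) \<subseteq> DCDS \<longleftrightarrow>
            gen_ideal sc F (jacobi_gens sc S0 S1 F) \<subseteq> DCDS \<and>
            (\<forall>u v n. u \<in> S0 \<union> S1 \<and> v \<in> S0 \<union> S1 \<longrightarrow>
               prodD sc F n (emb u) (emb v)
               + scD sc (epsD S1 (emb u) (emb v) * (-1) ^ n) (prodD sc F n (emb v) (emb u)) \<in> DCDS))
       \<and> (gen_ideal sc F (jacobi_gens sc S0 S1 F \<union> skew_gens sc S0 S1 F) \<subseteq> DCDS \<longrightarrow>
            (\<forall>u. emb u \<in> gen_ideal sc F (jacobi_gens sc S0 S1 F \<union> skew_gens sc S0 S1 F) \<longrightarrow> u = 0))"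
proof -
  interpret formula sc S0 S1 F
    by unfold_locales (fact assms)
  have "u = 0" if "jacobi_skew_ideal \<subseteq> DCDS" "emb u \<in> jacobi_skew_ideal" for u
    using that by (auto simp: DCDS_def emb_def)
  then show ?thesis
    using jacobi_skew_ideal_subset_DCDS_iff unfolding skew_symmetric_mod_D_def by blast
qed

end
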